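(* Let $\phi\in\mathrm{Aut}_0(H)$. Then for any $n\in\mathbb{Z}$ and $m\geq1$, $\phi(x^ny^m)=\alpha_{n,m}x^ny^m+h_{n,m}$ for some $\alpha_{n,m}\in k^\times$ and $h_{n,m}\in\sum_{i=0}^{m-1}H(i)$. Moreover, if $\alpha_{n,1}=1$ for all $n\in\mathbb{Z}$, then $\alpha_{n,m}=1$ for all $n\in\mathbb{Z}$ and $m\geq1$.
   Context: Let $k$ be a field and $0\neq q\in k$ not a root of unity. $H=k_q[x,x^{-1},y]$ is the $k$-algebra generated by $x,x^{-1},y$ with $xx^{-1}=x^{-1}x=1$, $yx=qxy$, a Hopf algebra with $\Delta(x)=x\otimes x$, $\Delta(x^{-1})=x^{-1}\otimes x^{-1}$, $\Delta(y)=y\otimes x+1\otimes y$, $\varepsilon(x)=1$, $\varepsilon(y)=0$; $\{x^ny^m:n\in\mathbb{Z},m\in\mathbb{N}\}$ is a $k$-basis. $H_0=\mathrm{span}\{x^n:n\in\mathbb{Z}\}$ and $H(m)=H_0y^m$. $\mathrm{Aut}_0(H)$ is the group of coalgebra automorphisms $\phi$ of $H$ with $\phi(1)=1$. *)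

theory Defs
  imports Main
begin

text \<open>Elements of H = k_q[x,x^-1,y] are represented by their coordinates with respect
  to the basis x^n y^m, i.e. finitely supported functions int \<times> nat \<Rightarrow> k
  (the pair (n,m) stands for x^n y^m).  Elements of H \<otimes> H are finitely supported
  functions on pairs of basis indices.\<close>

type_synonym 'k hel = "int \<times> nat \<Rightarrow> 'k"
type_synonym 'k hten = "(int \<times> nat) \<times> (int \<times> nat) \<Rightarrow> 'k"

definition supp :: "('a \<Rightarrow> 'k::zero) \<Rightarrow> 'a set" where
  "supp f = {a. f a \<noteq> 0}"

definition Hcarrier :: "'k::zero hel set" where
  "Hcarrier = {f. finite (supp f)}"

definition bas :: "int \<Rightarrow> nat \<Rightarrow> 'k::{zero,one} hel" where
  "bas n m = (\<lambda>b. if b = (n, m) then 1 else 0)"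

text \<open>Gaussian (q-)binomial coefficients: (a+b)^m = sum_i qbinom q m i a^i b^(m-i) when b a = q a b\<close>
fun qbinom :: "'k::comm_ring_1 \<Rightarrow> nat \<Rightarrow> nat \<Rightarrow> 'k" where
  "qbinom q 0 0 = 1"
| "qbinom q 0 (Suc i) = 0"
| "qbinom q (Suc m) 0 = 1"
| "qbinom q (Suc m) (Suc i) = qbinom q m i + q ^ (Suc i) * qbinom q m (Suc i)"

text \<open>Comultiplication: Delta(x^n y^m) = sum_i qbinom q m i  x^n y^i \<otimes> x^(n+i) y^(m-i),
  obtained from Delta(x) = x\<otimes>x, Delta(y) = y\<otimes>x + 1\<otimes>y and multiplicativity.\<close>
definition Delta :: "'k::comm_ring_1 \<Rightarrow> 'k hel \<Rightarrow> 'k hten" where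
  "Delta q f = (\<lambda>((n1, i), (n2, j)).
      if n2 = n1 + int i then qbinom q (i + j) i * f (n1, i + j) else 0)"

definition eps :: "'k::comm_ring_1 hel \<Rightarrow> 'k" where
  "eps f = (\<Sum>n\<in>{n. f (n, 0) \<noteq> 0}. f (n, 0))"

text \<open>phi \<otimes> phi applied to a (finitely supported) tensor\<close>
definition tensmap :: "('k::comm_ring_1 hel \<Rightarrow> 'k hel) \<Rightarrow> 'k hten \<Rightarrow> 'k hten" where
  "tensmap \<phi> t = (\<lambda>(c, d). \<Sum>(a, b)\<in>supp t. t (a, b) * \<phi> (bas (fst a) (snd a)) c
                                             * \<phi> (bas (fst b) (snd b)) d)"

definition klinear :: "('k::comm_ring_1 hel \<Rightarrow> 'k hel) \<Rightarrow> bool" where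
  "klinear \<phi> \<longleftrightarrow> (\<forall>f\<in>Hcarrier. \<forall>g\<in>Hcarrier. \<phi> (\<lambda>b. f b + g b) = (\<lambda>b. \<phi> f b + \<phi> g b))
     \<and> (\<forall>c. \<forall>f\<in>Hcarrier. \<phi> (\<lambda>b. c * f b) = (\<lambda>b. c * \<phi> f b))"

definition Aut0 :: "'k::field \<Rightarrow> ('k hel \<Rightarrow> 'k hel) set" where
  "Aut0 q = {\<phi>. klinear \<phi> \<and> bij_betw \<phi> Hcarrier Hcarrier
      \<and> (\<forall>f\<in>Hcarrier. Delta q (\<phi> f) = tensmap \<phi> (Delta q f))
      \<and> (\<forall>f\<in>Hcarrier. eps (\<phi> f) = eps f)
      \<and> \<phi> (bas 0 0) = bas 0 0}"

text \<open>sum_{i=0}^{m-1} H(i), where H(i) = H_0 y^i\<close>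
definition lowdeg :: "nat \<Rightarrow> 'k::zero hel set" where
  "lowdeg m = {h \<in> Hcarrier. \<forall>n i. h (n, i) \<noteq> 0 \<longrightarrow> i < m}"

end

theory Submission
  imports Defs
begin

text \<open>Grouplikes go to grouplikes, so \<open>\<phi>(x^n) = x^\<sigma>(n)\<close>. Comparing coefficients in
  \<open>\<Delta>\<phi> = (\<phi>\<otimes>\<phi>)\<Delta>\<close>, and using that the q-integers \<open>qbinom q D 1\<close> do not vanish because q is
  not a root of unity, shows that \<phi> does not raise the y-degree and that a nonzero coefficient of
  \<open>\<phi>(x^n y^m)\<close> at \<open>x^n' y^m\<close> forces \<open>n' = \<sigma>(n)\<close> and \<open>\<sigma>(n+m) = n'+m\<close>. If \<open>\<phi>(x^n y)\<close> had no
  y-term it would be a multiple of \<open>x^\<sigma>(n) - x^\<sigma>(n+1) = \<phi>(x^n - x^(n+1))\<close>, contradicting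
  injectivity; hence \<open>\<sigma>(n+1) = \<sigma>(n) + 1\<close>, and \<open>\<phi>(1) = 1\<close> gives \<open>\<sigma> = id\<close>. The same coefficient
  comparison yields \<open>\<alpha>(n,m+1) = \<alpha>(n,1) \<alpha>(n+1,m)\<close>, so \<open>\<alpha>(n,m)\<close> is a product of the \<open>\<alpha>(n+i,1)\<close>.\<close>

lemma bas_apply [simp]: "bas s m (x, i) = (if x = s \<and> i = m then 1 else 0)"
  by (simp add: bas_def)

lemma bas_eq_iff: "bas s i = (bas t j :: 'k::zero_neq_one hel) \<longleftrightarrow> s = t \<and> i = j"
  by (metis bas_apply zero_neq_one)

lemma bas_in_Hcarrier: "bas n m \<in> Hcarrier"
proof -
  have "supp (bas n m) \<subseteq> {(n, m)}" by (auto simp: supp_def bas_def)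
  then show ?thesis unfolding Hcarrier_def by (auto intro: finite_subset)
qed

lemma Hcarrier_lincomb:
  assumes "f \<in> Hcarrier" and "g \<in> Hcarrier"
  shows "(\<lambda>b. a * f b + c * g b :: 'k::semiring_0) \<in> Hcarrier"
proof -
  have "supp (\<lambda>b. a * f b + c * g b) \<subseteq> supp f \<union> supp g" by (auto simp: supp_def)
  with assms show ?thesis unfolding Hcarrier_def by (auto intro: finite_subset)
qed

lemma klinear_lincomb:
  assumes "klinear \<phi>" and f: "f \<in> Hcarrier" and g: "g \<in> Hcarrier"
  shows "\<phi> (\<lambda>b. a * f b + c * g b) = (\<lambda>b. a * \<phi> f b + c * \<phi> g b)"
proof -
  have "(\<lambda>b. a * f b) \<in> Hcarrier" "(\<lambda>b. c * g b) \<in> Hcarrier"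
    using Hcarrier_lincomb[OF f f, of a 0] Hcarrier_lincomb[OF g g, of c 0] by simp_all
  with assms show ?thesis unfolding klinear_def by simp
qed

lemma qbinom_eq_0: "m < i \<Longrightarrow> qbinom q m i = 0"
  by (induction q m i rule: qbinom.induct) auto

lemma qbinom_0_right [simp]: "qbinom q m 0 = 1"
  by (cases m) auto

lemma qbinom_diag [simp]: "qbinom q m m = 1"
  by (induction m) (auto simp: qbinom_eq_0)

lemma qbinom_1_right: "(1 - q) * qbinom q m 1 = 1 - q ^ m"
proof (induction m)
  case (Suc m)
  have "(1 - q) * qbinom q (Suc m) 1 = (1 - q) + q * ((1 - q) * qbinom q m 1)"
    by (simp add: algebra_simps)
  then show ?case unfolding Suc.IH by (simp add: algebra_simps)
qed simp

lemma qbinom_1_right_nonzero: "q ^ m \<noteq> 1 \<Longrightarrow> qbinom q m 1 \<noteq> 0"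
  using qbinom_1_right[of q m] by auto

lemma sum_atMost_eq_single:
  "k \<le> m \<Longrightarrow> (\<And>i. i \<le> m \<Longrightarrow> i \<noteq> k \<Longrightarrow> g i = 0) \<Longrightarrow> (\<Sum>i\<le>(m::nat). g i) = g k"
  by (subst sum.mono_neutral_right[of "{..m}" "{k}"]) auto

lemma supp_Delta_bas:
  "supp (Delta q (bas n m)) \<subseteq> (\<lambda>i. ((n, i), (n + int i, m - i))) ` {..m}"
proof
  fix x assume "x \<in> supp (Delta q (bas n m))"
  moreover obtain n1 i n2 j where x: "x = ((n1, i), (n2, j))" by (metis prod.exhaust)
  ultimately have "n1 = n" "n2 = n + int i" "i + j = m"
    by (auto simp: supp_def Delta_def split: if_splits)
  with x show "x \<in> (\<lambda>i. ((n, i), (n + int i, m - i))) ` {..m}" by auto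
qed

lemma tensmap_Delta_bas:
  "tensmap \<phi> (Delta q (bas n m)) (c, d)
     = (\<Sum>k\<le>m. qbinom q m k * \<phi> (bas n k) c * \<phi> (bas (n + int k) (m - k)) d)"
proof -
  let ?t = "Delta q (bas n m)"
  let ?g = "\<lambda>(a, b). ?t (a, b) * \<phi> (bas (fst a) (snd a)) c * \<phi> (bas (fst b) (snd b)) d"
  have "tensmap \<phi> ?t (c, d) = sum ?g (supp ?t)" by (simp add: tensmap_def)
  also have "\<dots> = sum ?g ((\<lambda>i. ((n, i), (n + int i, m - i))) ` {..m})"
    by (intro sum.mono_neutral_left supp_Delta_bas) (auto simp: supp_def)
  also have "\<dots> = (\<Sum>k\<le>m. qbinom q m k * \<phi> (bas n k) c * \<phi> (bas (n + int k) (m - k)) d)"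
    by (subst sum.reindex) (auto simp: inj_on_def Delta_def intro: sum.cong)
  finally show ?thesis .
qed

lemma grouplike_eq_bas:
  fixes g :: "'k::idom hel"
  assumes mult: "\<And>c d. Delta q g (c, d) = g c * g d" and counit: "eps g = 1"
  shows "\<exists>s. g = bas s 0"
proof -
  have G: "g (n1, i) * g (n2, j) = (if n2 = n1 + int i then qbinom q (i + j) i * g (n1, i + j) else 0)"
    for n1 n2 i j
    using mult[of "(n1, i)" "(n2, j)"] by (simp add: Delta_def)
  obtain s where s: "g (s, 0) \<noteq> 0"
    using counit by (force simp: eps_def)
  have s1: "g (s, 0) = 1"
    using G[of s 0 s 0] s by (simp add: power2_eq_square)
  have off: "g (x, 0) = 0" if "x \<noteq> s" for x
    using G[of x 0 s 0] that s by simp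
  have higher: "g (x, k) = 0" if "k \<noteq> 0" for x k
  proof (rule ccontr)
    assume nz: "g (x, k) \<noteq> 0"
    have "g (x, 0) \<noteq> 0" using G[of x 0 x k] nz by auto
    moreover have "g (x + int k, 0) \<noteq> 0" using G[of x k "x + int k" 0] nz by auto
    ultimately have "x = s" "x + int k = s" using off by blast+
    with that show False by simp
  qed
  have "g = bas s 0"
  proof
    fix b :: "int \<times> nat"
    obtain x i where "b = (x, i)" by fastforce
    then show "g b = bas s 0 b" using s1 off higher[of i x] by auto
  qed
  then show ?thesis ..
qed

locale coalg_endo =
  fixes q :: "'k::idom" and \<phi> :: "'k hel \<Rightarrow> 'k hel"
  assumes comult: "f \<in> Hcarrier \<Longrightarrow> Delta q (\<phi> f) = tensmap \<phi> (Delta q f)"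
    and counit: "f \<in> Hcarrier \<Longrightarrow> eps (\<phi> f) = eps f"
begin

lemma Delta_phi_bas:
  "Delta q (\<phi> (bas n m)) (c, d)
     = (\<Sum>k\<le>m. qbinom q m k * \<phi> (bas n k) c * \<phi> (bas (n + int k) (m - k)) d)"
  using comult[OF bas_in_Hcarrier] tensmap_Delta_bas by simp

lemma comult_coeff:
  "qbinom q (i + j) i * \<phi> (bas n m) (n1, i + j)
     = (\<Sum>k\<le>m. qbinom q m k * \<phi> (bas n k) (n1, i) * \<phi> (bas (n + int k) (m - k)) (n1 + int i, j))"
  using Delta_phi_bas[of n m "(n1, i)" "(n1 + int i, j)"] by (simp add: Delta_def)

lemma comult_coeff_off:
  "n2 \<noteq> n1 + int i
   \<Longrightarrow> (\<Sum>k\<le>m. qbinom q m k * \<phi> (bas n k) (n1, i) * \<phi> (bas (n + int k) (m - k)) (n2, j)) = 0"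
  using Delta_phi_bas[of n m "(n1, i)" "(n2, j)"] by (simp add: Delta_def)

definition sigma :: "int \<Rightarrow> int" where
  "sigma n = (THE s. \<phi> (bas n 0) = bas s 0)"

lemma phi_bas_0: "\<phi> (bas n 0) = bas (sigma n) 0"
proof -
  have "{n'. bas n 0 (n', 0) \<noteq> (0::'k)} = {n}" by auto
  then have "eps (\<phi> (bas n 0)) = 1" unfolding counit[OF bas_in_Hcarrier] by (simp add: eps_def)
  moreover have "Delta q (\<phi> (bas n 0)) (c, d) = \<phi> (bas n 0) c * \<phi> (bas n 0) d" for c d
    by (simp add: Delta_phi_bas)
  ultimately obtain s where s: "\<phi> (bas n 0) = bas s 0"
    using grouplike_eq_bas by blast
  then have "sigma n = s" unfolding sigma_def by (rule the_equality) (simp add: s bas_eq_iff)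
  with s show ?thesis by simp
qed

end

locale coalg_endo_nonroot = coalg_endo q \<phi> for q :: "'k::idom" and \<phi> +
  assumes q_not_root: "0 < r \<Longrightarrow> q ^ r \<noteq> 1"
begin

lemma phi_bas_degree_le: "\<phi> (bas n m) (n1, D) \<noteq> 0 \<Longrightarrow> D \<le> m"
proof (induction m arbitrary: n n1 D rule: less_induct)
  case (less m)
  show ?case
  proof (rule ccontr)
    assume "\<not> D \<le> m"
    then obtain j where D: "D = 1 + j" and "m \<le> j" by (cases D) auto
    have "qbinom q (1 + j) 1 * \<phi> (bas n m) (n1, 1 + j)
        = (\<Sum>k\<le>m. qbinom q m k * \<phi> (bas n k) (n1, 1) * \<phi> (bas (n + int k) (m - k)) (n1 + 1, j))"
      using comult_coeff[of 1 j n m n1] by simp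
    also have "\<dots> = 0"
    proof (intro sum.neutral ballI)
      fix k assume "k \<in> {..m}"
      show "qbinom q m k * \<phi> (bas n k) (n1, 1) * \<phi> (bas (n + int k) (m - k)) (n1 + 1, j) = 0"
      proof (cases "k = 0")
        case False
        with \<open>k \<in> {..m}\<close> \<open>m \<le> j\<close> have "m - k < m" "\<not> j \<le> m - k" by auto
        with less.IH have "\<phi> (bas (n + int k) (m - k)) (n1 + 1, j) = 0" by blast
        then show ?thesis by simp
      qed (simp add: phi_bas_0)
    qed
    finally have "qbinom q D 1 * \<phi> (bas n m) (n1, D) = 0" by (simp add: D)
    moreover have "qbinom q D 1 \<noteq> 0" using q_not_root[of D] D by (intro qbinom_1_right_nonzero) simp
    ultimately show False using less.prems by simp
  qed
qed

lemma top_coeff_nonzero_imp_sigma: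
  assumes nz: "\<phi> (bas n m) (n1, m) \<noteq> 0"
  shows "n1 = sigma n"
proof -
  have "\<phi> (bas n m) (n1, m)
      = (\<Sum>k\<le>m. qbinom q m k * \<phi> (bas n k) (n1, 0) * \<phi> (bas (n + int k) (m - k)) (n1, m))"
    using comult_coeff[of 0 m n m n1] by simp
  also have "\<dots> = qbinom q m 0 * \<phi> (bas n 0) (n1, 0) * \<phi> (bas (n + int 0) (m - 0)) (n1, m)"
  proof (rule sum_atMost_eq_single)
    fix k assume "k \<le> m" "k \<noteq> 0"
    then have "\<not> m \<le> m - k" by auto
    then show "qbinom q m k * \<phi> (bas n k) (n1, 0) * \<phi> (bas (n + int k) (m - k)) (n1, m) = 0"
      using phi_bas_degree_le by (metis mult_zero_right)
  qed auto
  finally show ?thesis using nz by (auto simp: phi_bas_0 split: if_splits)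
qed

lemma top_coeff_nonzero_imp_sigma_shift:
  assumes nz: "\<phi> (bas n m) (n1, m) \<noteq> 0"
  shows "sigma (n + int m) = n1 + int m"
proof -
  have "\<phi> (bas n m) (n1, m)
      = (\<Sum>k\<le>m. qbinom q m k * \<phi> (bas n k) (n1, m) * \<phi> (bas (n + int k) (m - k)) (n1 + int m, 0))"
    using comult_coeff[of m 0 n m n1] by simp
  also have "\<dots> = qbinom q m m * \<phi> (bas n m) (n1, m) * \<phi> (bas (n + int m) (m - m)) (n1 + int m, 0)"
  proof (rule sum_atMost_eq_single)
    fix k assume "k \<le> m" "k \<noteq> m"
    then have "\<not> m \<le> k" by auto
    then show "qbinom q m k * \<phi> (bas n k) (n1, m) * \<phi> (bas (n + int k) (m - k)) (n1 + int m, 0) = 0"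
      using phi_bas_degree_le by (metis mult_zero_left mult_zero_right)
  qed auto
  finally show ?thesis using nz by (auto simp: phi_bas_0 split: if_splits)
qed

end

locale coalg_aut = coalg_endo_nonroot q \<phi> for q :: "'k::idom" and \<phi> +
  assumes linear: "klinear \<phi>"
    and inj: "inj_on \<phi> Hcarrier"
    and closed: "f \<in> Hcarrier \<Longrightarrow> \<phi> f \<in> Hcarrier"
    and unit: "\<phi> (bas 0 0) = bas 0 0"
begin

lemma sigma_inj: "sigma n = sigma n' \<Longrightarrow> n = n'"
  using inj_onD[OF inj _ bas_in_Hcarrier bas_in_Hcarrier] by (metis phi_bas_0 bas_eq_iff)

lemma phi_bas_1_without_top:
  assumes no_top: "\<forall>x. \<phi> (bas n 1) (x, 1) = 0"
  shows "\<phi> (bas n 1) = (\<lambda>b. \<phi> (bas n 1) (sigma n, 0) * bas (sigma n) 0 b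
                          + (- \<phi> (bas n 1) (sigma n, 0)) * bas (sigma (n + 1)) 0 b)"
proof
  fix b :: "int \<times> nat"
  define f where "f = \<phi> (bas n 1)"
  define s where "s = sigma n"
  define t where "t = sigma (n + 1)"
  have "s \<noteq> t" unfolding s_def t_def using sigma_inj by force
  have higher: "f (x, i) = 0" if "i \<noteq> 0" for x i
    using no_top phi_bas_degree_le[of n 1 x i] that unfolding f_def by (cases "i = 1") auto
  have diag: "f (x, 0) = (if x = s then 1 else 0) * f (x, 0) + f (x, 0) * (if x = t then 1 else 0)" for x
    using comult_coeff[of 0 0 n 1 x]
    by (simp add: atMost_Suc phi_bas_0 f_def s_def t_def add.commute)
  have off: "f (x, 0) = 0" if "x \<noteq> s" "x \<noteq> t" for x
    using diag[of x] that by simp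
  have "f (s, 0) + f (t, 0) = 0"
    using comult_coeff_off[of t s 0 1 n 0] \<open>s \<noteq> t\<close>
    by (simp add: atMost_Suc phi_bas_0 f_def s_def t_def)
  then show "\<phi> (bas n 1) b = f (s, 0) * bas s 0 b + (- f (s, 0)) * bas t 0 b"
  proof (cases b)
    case (Pair x i)
    then show ?thesis
      using higher[of i x] off[of x] \<open>s \<noteq> t\<close> \<open>f (s, 0) + f (t, 0) = 0\<close>
      by (cases "i = 0") (auto simp: add_eq_0_iff f_def)
  qed
qed

lemma phi_bas_1_top_nonzero: "\<exists>x. \<phi> (bas n 1) (x, 1) \<noteq> 0"
proof (rule ccontr)
  assume "\<nexists>x. \<phi> (bas n 1) (x, 1) \<noteq> 0"
  moreover define \<beta> where "\<beta> = \<phi> (bas n 1) (sigma n, 0)"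
  ultimately have "\<phi> (bas n 1) = (\<lambda>b. \<beta> * bas (sigma n) 0 b + (- \<beta>) * bas (sigma (n + 1)) 0 b)"
    using phi_bas_1_without_top by simp
  also have "\<dots> = \<phi> (\<lambda>b. \<beta> * bas n 0 b + (- \<beta>) * bas (n + 1) 0 b)"
    by (simp only: klinear_lincomb[OF linear bas_in_Hcarrier bas_in_Hcarrier] phi_bas_0)
  finally have "bas n 1 = (\<lambda>b. \<beta> * bas n 0 b + (- \<beta>) * bas (n + 1) 0 b)"
    by (rule inj_onD[OF inj]) (intro bas_in_Hcarrier Hcarrier_lincomb)+
  from fun_cong[OF this, of "(n, 1)"] show False by simp
qed

lemma sigma_eq [simp]: "sigma n = n"
proof (induction n rule: int_induct[where k = 0])
  case base
  show ?case using unit phi_bas_0[of 0] by (simp add: bas_eq_iff)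
next
  case (step1 n)
  obtain x where "\<phi> (bas n 1) (x, 1) \<noteq> 0" using phi_bas_1_top_nonzero by blast
  then have "x = sigma n" "sigma (n + 1) = x + 1"
    using top_coeff_nonzero_imp_sigma[of n 1 x] top_coeff_nonzero_imp_sigma_shift[of n 1 x] by simp_all
  with step1 show ?case by simp
next
  case (step2 n)
  obtain x where "\<phi> (bas (n - 1) 1) (x, 1) \<noteq> 0" using phi_bas_1_top_nonzero by blast
  then have "x = sigma (n - 1)" "sigma n = x + 1"
    using top_coeff_nonzero_imp_sigma[of "n - 1" 1 x] top_coeff_nonzero_imp_sigma_shift[of "n - 1" 1 x] by simp_all
  with step2 show ?case by simp
qed

definition alpha :: "int \<Rightarrow> nat \<Rightarrow> 'k" where
  "alpha n m = \<phi> (bas n m) (n, m)"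

lemma alpha_0 [simp]: "alpha n 0 = 1"
  by (simp add: alpha_def phi_bas_0)

lemma alpha_1_nonzero: "alpha n 1 \<noteq> 0"
  using phi_bas_1_top_nonzero[of n] top_coeff_nonzero_imp_sigma[of n 1] by (auto simp: alpha_def)

lemma alpha_Suc: "alpha n (Suc m) = alpha n 1 * alpha (n + 1) m"
proof -
  have "qbinom q (1 + m) 1 * \<phi> (bas n (Suc m)) (n, 1 + m)
      = (\<Sum>k\<le>Suc m. qbinom q (Suc m) k * \<phi> (bas n k) (n, 1)
                       * \<phi> (bas (n + int k) (Suc m - k)) (n + 1, m))"
    using comult_coeff[of 1 m n "Suc m" n] by simp
  also have "\<dots> = qbinom q (Suc m) 1 * \<phi> (bas n 1) (n, 1)
                   * \<phi> (bas (n + int 1) (Suc m - 1)) (n + 1, m)"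
  proof (rule sum_atMost_eq_single)
    fix k assume k: "k \<le> Suc m" "k \<noteq> 1"
    show "qbinom q (Suc m) k * \<phi> (bas n k) (n, 1) * \<phi> (bas (n + int k) (Suc m - k)) (n + 1, m) = 0"
    proof (cases "k = 0")
      case False
      with k have "\<not> m \<le> Suc m - k" by auto
      then show ?thesis using phi_bas_degree_le by (metis mult_zero_right)
    qed (simp add: phi_bas_0)
  qed simp
  finally have "qbinom q (Suc m) 1 * alpha n (Suc m) = qbinom q (Suc m) 1 * (alpha n 1 * alpha (n + 1) m)"
    by (simp add: alpha_def)
  moreover have "qbinom q (Suc m) 1 \<noteq> 0"
    using q_not_root[of "Suc m"] by (intro qbinom_1_right_nonzero) simp
  ultimately show ?thesis by simp
qed

lemma alpha_eq_prod: "alpha n m = (\<Prod>i<m. alpha (n + int i) 1)"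
proof (induction m arbitrary: n)
  case (Suc m)
  have "alpha n (Suc m) = alpha n 1 * alpha (n + 1) m" by (rule alpha_Suc)
  also have "\<dots> = (\<Prod>i<Suc m. alpha (n + int i) 1)"
    by (simp only: Suc.IH prod.lessThan_Suc_shift) (simp add: add_ac)
  finally show ?case .
qed simp

lemma alpha_nonzero: "alpha n m \<noteq> 0"
  using alpha_1_nonzero by (subst alpha_eq_prod) simp

lemma phi_bas_minus_alpha_lowdeg: "(\<lambda>b. \<phi> (bas n m) b - alpha n m * bas n m b) \<in> lowdeg m"
proof -
  have "(\<lambda>b. 1 * \<phi> (bas n m) b + (- alpha n m) * bas n m b) \<in> Hcarrier"
    by (intro Hcarrier_lincomb closed bas_in_Hcarrier)
  moreover have "i < m" if "\<phi> (bas n m) (x, i) - alpha n m * bas n m (x, i) \<noteq> 0" for x i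
  proof -
    have "i \<le> m" using that phi_bas_degree_le[of n m x i] by (auto split: if_splits)
    moreover have "i \<noteq> m" using that top_coeff_nonzero_imp_sigma[of n m x] by (cases "x = n") (auto simp: alpha_def)
    ultimately show ?thesis by simp
  qed
  ultimately show ?thesis by (simp add: lowdeg_def)
qed

end

lemma Aut0_coalg_aut:
  assumes "\<forall>r::nat. 0 < r \<longrightarrow> q ^ r \<noteq> 1" and "\<phi> \<in> Aut0 q"
  shows "coalg_aut q \<phi>"
  using assms by unfold_locales (auto simp: Aut0_def bij_betw_def)

theorem lemma2p9:
  fixes q :: "'k::field" and \<phi> :: "'k hel \<Rightarrow> 'k hel"
  assumes "q \<noteq> 0" and "\<forall>r::nat. r > 0 \<longrightarrow> q ^ r \<noteq> 1"
    and "\<phi> \<in> Aut0 q"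
  shows "(\<forall>n m. m \<ge> 1 \<longrightarrow> (\<exists>\<alpha> h. \<alpha> \<noteq> 0 \<and> h \<in> lowdeg m \<and>
            \<phi> (bas n m) = (\<lambda>b. \<alpha> * bas n m b + h b)))
       \<and> ((\<forall>n. \<exists>h. h \<in> lowdeg 1 \<and> \<phi> (bas n 1) = (\<lambda>b. bas n 1 b + h b))
            \<longrightarrow> (\<forall>n m. m \<ge> 1 \<longrightarrow> (\<exists>h. h \<in> lowdeg m \<and> \<phi> (bas n m) = (\<lambda>b. bas n m b + h b))))"
proof -
  interpret coalg_aut q \<phi> using assms(2,3) by (rule Aut0_coalg_aut)
  have decomp: "\<phi> (bas n m) = (\<lambda>b. alpha n m * bas n m b + (\<phi> (bas n m) b - alpha n m * bas n m b))"
    for n m by simp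
  show ?thesis
  proof (intro conjI allI impI)
    fix n m
    show "\<exists>\<alpha> h. \<alpha> \<noteq> 0 \<and> h \<in> lowdeg m \<and> \<phi> (bas n m) = (\<lambda>b. \<alpha> * bas n m b + h b)"
      using alpha_nonzero phi_bas_minus_alpha_lowdeg decomp by (intro exI conjI)
  next
    fix n m
    assume normalized: "\<forall>n. \<exists>h. h \<in> lowdeg 1 \<and> \<phi> (bas n 1) = (\<lambda>b. bas n 1 b + h b)"
    have "alpha n' 1 = 1" for n'
    proof -
      obtain h where "h \<in> lowdeg 1" and "\<phi> (bas n' 1) = (\<lambda>b. bas n' 1 b + h b)"
        using normalized by blast
      then show ?thesis by (auto simp: alpha_def lowdeg_def)
    qed
    then have "alpha n m = 1" by (subst alpha_eq_prod) simp
    then show "\<exists>h. h \<in> lowdeg m \<and> \<phi> (bas n m) = (\<lambda>b. bas n m b + h b)"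
      using phi_bas_minus_alpha_lowdeg[of n m] by (intro exI[of _ "\<lambda>b. \<phi> (bas n m) b - bas n m b"]) simp
  qed
qed

end
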